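(* Fix $N\ge1$, $\sigma_0>0$, $p_A\in(0,1)$. If $0<\sigma_1<\sigma_0$, the function $a\mapsto\xi_>(a,\sigma_1)$ is non-decreasing on $[0,\infty)$; if $\sigma_1>\sigma_0$, the function $a\mapsto\xi_<(a,\sigma_1)$ is non-decreasing on $[0,\infty)$.
   Context: $\chi^2_N(\lambda,x)=\mathbb{P}(\|Z+\mu\|^2\le x)$ for $Z\sim\mathcal{N}(0,I_N)$, $\|\mu\|^2=\lambda\ge 0$ (noncentral chi-squared cdf), and $\chi^2_{N,qf}(\lambda,p)=\inf\{x:\chi^2_N(\lambda,x)\ge p\}$ for $p\in(0,1)$. Fix $N$, $\sigma_0>0$, $p_A\in(0,1)$. For $a\ge0$ and $0<\sigma_1<\sigma_0$ define $$\xi_>(a,\sigma_1)=\chi^2_N\!\left(\frac{\sigma_1^2a^2}{(\sigma_0^2-\sigma_1^2)^2},\ \frac{\sigma_0^2}{\sigma_1^2}\chi^2_{N,qf}\!\left(\frac{\sigma_0^2a^2}{(\sigma_0^2-\sigma_1^2)^2},1-p_A\right)\right),$$ and for $\sigma_1>\sigma_0$ define $$\xi_<(a,\sigma_1)=1-\chi^2_N\!\left(\frac{\sigma_1^2a^2}{(\sigma_1^2-\sigma_0^2)^2},\ \frac{\sigma_0^2}{\sigma_1^2}\chi^2_{N,qf}\!\left(\frac{\sigma_0^2a^2}{(\sigma_1^2-\sigma_0^2)^2},p_A\right)\right).$$ These equal the maximal probability $\mathbb{P}(f(Y_1)=B)$, $Y_1\sim\mathcal N(x_1,\sigma_1^2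 I_N)$, over binary classifiers $f$ with $\mathbb{P}(f(Y_0)=B)\le 1-p_A$, $Y_0\sim\mathcal N(x_0,\sigma_0^2I_N)$, where $a=\|x_1-x_0\|$. *)

theory Defs
  imports "HOL-Analysis.Analysis"
begin

definition std_gauss :: "('n::finite) itself \<Rightarrow> (real^'n) measure" where
  "std_gauss _ = density lborel
     (\<lambda>z. ennreal ((2 * pi) powr (- real CARD('n) / 2) * exp (- (norm z)\<^sup>2 / 2)))"

text \<open>Noncentral chi-squared cdf: P(|Z + mu|^2 <= x) with |mu|^2 = lam; we take the
  particular mean vector mu with all components sqrt(lam/N) (the value does not
  depend on the choice of mu with |mu|^2 = lam, by rotation invariance).\<close>
definition chi2_cdf :: "('n::finite) itself \<Rightarrow> real \<Rightarrow> real \<Rightarrow> real" where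
  "chi2_cdf T lam x =
     measure (std_gauss T) {z. (norm (z + (\<chi> i. sqrt (lam / real CARD('n)))))\<^sup>2 \<le> x}"

definition chi2_qf :: "('n::finite) itself \<Rightarrow> real \<Rightarrow> real \<Rightarrow> real" where
  "chi2_qf T lam p = Inf {x. chi2_cdf T lam x \<ge> p}"

definition xi_gt :: "('n::finite) itself \<Rightarrow> real \<Rightarrow> real \<Rightarrow> real \<Rightarrow> real \<Rightarrow> real" where
  "xi_gt T sigma0 pA a sigma1 =
     chi2_cdf T (sigma1\<^sup>2 * a\<^sup>2 / (sigma0\<^sup>2 - sigma1\<^sup>2)\<^sup>2)
       (sigma0\<^sup>2 / sigma1\<^sup>2 * chi2_qf T (sigma0\<^sup>2 * a\<^sup>2 / (sigma0\<^sup>2 - sigma1\<^sup>2)\<^sup>2) (1 - pA))"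

definition xi_lt :: "('n::finite) itself \<Rightarrow> real \<Rightarrow> real \<Rightarrow> real \<Rightarrow> real \<Rightarrow> real" where
  "xi_lt T sigma0 pA a sigma1 =
     1 - chi2_cdf T (sigma1\<^sup>2 * a\<^sup>2 / (sigma1\<^sup>2 - sigma0\<^sup>2)\<^sup>2)
       (sigma0\<^sup>2 / sigma1\<^sup>2 * chi2_qf T (sigma0\<^sup>2 * a\<^sup>2 / (sigma1\<^sup>2 - sigma0\<^sup>2)\<^sup>2) pA)"

end

theory Submission
  imports Defs "HOL-Probability.Probability"
begin

text \<open>
  Both functions are expressed through \<open>F\<^sub>m(x) = P(\<parallel>Z + m\<bullet>1\<parallel>\<^sup>2 \<le> x)\<close> and its quantile,
  evaluated at a mean parameter proportional to \<open>a\<close>. For two parameters \<open>u \<le> u'\<close>, the value at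
  \<open>u'\<close> is the mass under \<open>N((\<sigma>\<^sub>1\<^sup>2 - \<sigma>\<^sub>0\<^sup>2) u'\<bullet>1, \<sigma>\<^sub>1\<^sup>2 I)\<close> of a ball centred at \<open>-\<sigma>\<^sub>0\<^sup>2 u'\<bullet>1\<close> that has mass
  exactly \<open>p\<close> under \<open>N(0, \<sigma>\<^sub>0\<^sup>2 I)\<close>. The likelihood ratio of these two Gaussians is a monotone
  function of the distance to that centre, so by the Neyman--Pearson lemma the ball has the
  largest (if \<open>\<sigma>\<^sub>1 < \<sigma>\<^sub>0\<close>) resp. smallest (if \<open>\<sigma>\<^sub>1 > \<sigma>\<^sub>0\<close>) second mass among sets of the
  same first mass. The value at \<open>u\<close> is compared with the mass of a suitable second ball by
  Anderson's inequality: moving the centre of a ball away from the origin decreases its mass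
  under a centred Gaussian.
\<close>

section \<open>Quantiles, densities and the Neyman--Pearson lemma\<close>

lemma (in real_distribution) cdf_Inf_quantile:
  assumes cont: "\<And>x. isCont (cdf M) x" and p: "0 < p" "p < 1"
  shows "cdf M (Inf {x. p \<le> cdf M x}) = p"
proof -
  define S where "S = {x. p \<le> cdf M x}"
  define q where "q = Inf S"
  have "\<forall>\<^sub>F x in at_top. p < cdf M x"
    using cdf_lim_at_top_prob p(2) by (rule order_tendstoD)
  then obtain x0 where "p < cdf M x0"
    by (auto simp: eventually_at_top_linorder)
  then have ne: "S \<noteq> {}"
    unfolding S_def by (auto intro: less_imp_le)
  have "\<forall>\<^sub>F x in at_bot. cdf M x < p"
    using cdf_lim_at_bot p(1) by (rule order_tendstoD)
  then obtain b where b: "\<And>x. x \<le> b \<Longrightarrow> cdf M x < p"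
    by (auto simp: eventually_at_bot_linorder)
  have bdd: "bdd_below S"
    by (rule bdd_belowI[of _ b]) (use b in \<open>force simp: S_def not_less[symmetric]\<close>)
  have "closed S"
    unfolding S_def using cont by (intro closed_Collect_le continuous_at_imp_continuous_on) auto
  then have "p \<le> cdf M q"
    using closed_contains_Inf[OF ne bdd] by (simp add: S_def q_def)
  moreover have "cdf M q \<le> p"
  proof (rule tendsto_upperbound)
    show "(cdf M \<longlongrightarrow> cdf M q) (at_left q)"
      using cont[of q] by (simp add: isCont_def filterlim_at_split)
    show "\<forall>\<^sub>F x in at_left q. cdf M x \<le> p"
    proof (rule eventually_at_leftI)
      show "cdf M x \<le> p" if "x \<in> {q - 1<..<q}" for x
      proof (rule ccontr)
        assume "\<not> cdf M x \<le> p"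
        then have "q \<le> x" unfolding q_def by (intro cInf_lower[OF _ bdd]) (simp add: S_def)
        with that show False by simp
      qed
    qed simp
  qed simp
  ultimately show ?thesis by (simp add: q_def S_def)
qed

lemma emeasure_density_mono_on:
  assumes [measurable]: "A \<in> sets N" "F \<in> borel_measurable N" "G \<in> borel_measurable N"
    and le: "\<And>y. y \<in> A \<Longrightarrow> F y \<le> G y"
  shows "emeasure (density N F) A \<le> emeasure (density N G) A"
  by (simp add: emeasure_density) (intro nn_integral_mono, simp add: le split: split_indicator)

lemma emeasure_density_cmult:
  assumes [measurable]: "A \<in> sets N" "F \<in> borel_measurable N"
  shows "emeasure (density N (\<lambda>y. c * F y)) A = c * emeasure (density N F) A"
  by (simp add: emeasure_density nn_integral_cmult mult.assoc)

lemma neyman_pearson: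
  fixes N :: "'a measure" and f0 f1 :: "'a \<Rightarrow> real" and K :: real
  defines "M0 \<equiv> density N (\<lambda>y. ennreal (f0 y))" and "M1 \<equiv> density N (\<lambda>y. ennreal (f1 y))"
  assumes fin: "finite_measure M0" "finite_measure M1"
    and [measurable]: "f0 \<in> borel_measurable N" "f1 \<in> borel_measurable N" "D \<in> sets N" "S \<in> sets N"
    and nonneg: "K \<ge> 0" "\<And>y. f0 y \<ge> 0"
    and in_D: "\<And>y. y \<in> D \<Longrightarrow> K * f0 y \<le> f1 y"
    and out_D: "\<And>y. y \<notin> D \<Longrightarrow> f1 y \<le> K * f0 y"
    and size: "measure M0 S \<le> measure M0 D"
  shows "measure M1 S \<le> measure M1 D"
proof -
  interpret M0: finite_measure M0 by (rule fin(1))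
  interpret M1: finite_measure M1 by (rule fin(2))
  have [simp]: "sets M0 = sets N" "sets M1 = sets N" by (simp_all add: M0_def M1_def)
  have cmult: "emeasure (density N (\<lambda>y. ennreal (K * f0 y))) A = ennreal K * emeasure M0 A"
    if "A \<in> sets N" for A
    using that nonneg unfolding M0_def by (simp add: ennreal_mult emeasure_density_cmult)
  have "emeasure M1 (S - D) \<le> emeasure (density N (\<lambda>y. ennreal (K * f0 y))) (S - D)"
    unfolding M1_def by (intro emeasure_density_mono_on ennreal_leI out_D) auto
  also have "\<dots> = ennreal K * emeasure M0 (S - D)"
    by (rule cmult) simp
  finally have off_D: "measure M1 (S - D) \<le> K * measure M0 (S - D)"
    using nonneg by (simp add: M0.emeasure_eq_measure M1.emeasure_eq_measure ennreal_mult[symmetric])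
  have "ennreal K * emeasure M0 (D - S) = emeasure (density N (\<lambda>y. ennreal (K * f0 y))) (D - S)"
    by (rule cmult[symmetric]) simp
  also have "\<dots> \<le> emeasure M1 (D - S)"
    unfolding M1_def by (intro emeasure_density_mono_on ennreal_leI in_D) auto
  finally have on_D: "K * measure M0 (D - S) \<le> measure M1 (D - S)"
    using nonneg by (simp add: M0.emeasure_eq_measure M1.emeasure_eq_measure ennreal_mult[symmetric])
  have "K * measure M0 (S - D) \<le> K * measure M0 (D - S)"
    using size nonneg(1) by (intro mult_left_mono)
      (simp_all add: M0.finite_measure_Diff' Int_commute[of D S])
  with off_D on_D have "measure M1 (S - D) \<le> measure M1 (D - S)" by linarith
  then show ?thesis by (simp add: M1.finite_measure_Diff' Int_commute[of D S])
qed

lemma emeasure_density_le_by_swap: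
  fixes N :: "'a measure"
  assumes [measurable]: "R \<in> N \<rightarrow>\<^sub>M N" and N: "distr N N R = N"
    and [measurable]: "\<phi> \<in> borel_measurable N" "A \<in> sets N" "B \<in> sets N"
    and swap: "\<And>z. R z \<in> A - B \<longleftrightarrow> z \<in> B - A"
    and dec: "\<And>z. z \<in> B - A \<Longrightarrow> \<phi> (R z) \<le> \<phi> z"
  shows "emeasure (density N \<phi>) A \<le> emeasure (density N \<phi>) B"
proof -
  let ?\<mu> = "density N \<phi>"
  have "emeasure ?\<mu> (A - B) = (\<integral>\<^sup>+z. \<phi> z * indicator (A - B) z \<partial>distr N N R)"
    by (simp add: N emeasure_density)
  also have "\<dots> = (\<integral>\<^sup>+z. \<phi> (R z) * indicator (B - A) z \<partial>N)"
  proof -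
    have "indicator (A - B) (R z) = (indicator (B - A) z :: ennreal)" for z
      using swap[of z] by (simp add: indicator_def)
    then show ?thesis by (subst nn_integral_distr) auto
  qed
  also have "\<dots> \<le> (\<integral>\<^sup>+z. \<phi> z * indicator (B - A) z \<partial>N)"
    by (intro nn_integral_mono) (auto simp: dec split: split_indicator)
  also have "\<dots> = emeasure ?\<mu> (B - A)"
    by (simp add: emeasure_density)
  finally have "emeasure ?\<mu> (A - B) \<le> emeasure ?\<mu> (B - A)" .
  then have "emeasure ?\<mu> (A \<inter> B) + emeasure ?\<mu> (A - B) \<le> emeasure ?\<mu> (A \<inter> B) + emeasure ?\<mu> (B - A)"
    by (rule add_left_mono)
  also have "emeasure ?\<mu> (A \<inter> B) + emeasure ?\<mu> (B - A) = emeasure ?\<mu> B"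
    by (subst plus_emeasure) (auto intro!: arg_cong[where f="emeasure ?\<mu>"])
  finally show ?thesis
    by (subst (asm) plus_emeasure) (auto simp: Int_Diff_Un)
qed

section \<open>Anderson-type inequality for shifted balls\<close>

lemma inner_sum_scaleR_Basis:
  "b \<in> Basis \<Longrightarrow> (\<Sum>j\<in>Basis. f j *\<^sub>R j) \<bullet> (b::'a::euclidean_space) = f b"
  by (simp add: inner_sum_left inner_Basis if_distrib cong: if_cong)

lemma norm_eq_componentwise:
  "(\<And>b. b \<in> Basis \<Longrightarrow> \<bar>x \<bullet> b\<bar> = \<bar>y \<bullet> b\<bar>) \<Longrightarrow> norm x = norm y"
  by (intro antisym norm_le_componentwise) simp_all

lemma abs_le_reflected:
  fixes z p q :: real
  assumes "\<bar>z + p\<bar> < \<bar>z + q\<bar>" "\<bar>p\<bar> \<le> \<bar>q\<bar>"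
  shows "\<bar>z\<bar> \<le> \<bar>z + p + q\<bar>"
proof -
  have "(z + p)\<^sup>2 < (z + q)\<^sup>2"
    using assms(1) by (metis abs_ge_zero power2_abs power_strict_mono zero_less_numeral)
  then have pos: "0 < (q - p) * (2 * z + p + q)"
    by (simp add: power2_eq_square algebra_simps)
  have "0 \<le> (q - p) * (q + p)"
    using assms(2) by (simp add: abs_le_square_iff power2_eq_square algebra_simps)
  with pos have "0 \<le> (q + p) * (2 * z + p + q)"
    by (auto simp: zero_less_mult_iff zero_le_mult_iff)
  then show ?thesis
    by (simp add: abs_le_square_iff power2_eq_square algebra_simps)
qed

lemma distr_lborel_reflection:
  fixes e :: "'a::euclidean_space" and c :: real
  assumes e: "e \<in> Basis"
  shows "distr lborel borel (\<lambda>z. z - (2 * (z \<bullet> e) + c) *\<^sub>R e) = lborel"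
proof -
  have refl: "(\<lambda>z. z - (2 * (z \<bullet> e) + c) *\<^sub>R e)
      = (\<lambda>z. (- c) *\<^sub>R e + (\<Sum>j\<in>Basis. ((if j = e then -1 else 1) * (z \<bullet> j)) *\<^sub>R j))"
  proof (rule ext, rule euclidean_eqI)
    fix z b :: 'a assume "b \<in> Basis"
    then show "(z - (2 * (z \<bullet> e) + c) *\<^sub>R e) \<bullet> b
        = ((- c) *\<^sub>R e + (\<Sum>j\<in>Basis. ((if j = e then -1 else 1) * (z \<bullet> j)) *\<^sub>R j)) \<bullet> b"
      using e by (cases "b = e") (simp_all add: inner_sum_scaleR_Basis inner_diff_left inner_add_left inner_Basis)
  qed
  have "(\<Prod>j\<in>(Basis::'a set). \<bar>if j = e then -1 else (1::real)\<bar>) = 1"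
    by (intro prod.neutral) simp
  moreover have "lborel = density (distr lborel borel (\<lambda>z. z - (2 * (z \<bullet> e) + c) *\<^sub>R e))
      (\<lambda>_. (\<Prod>j\<in>(Basis::'a set). \<bar>if j = e then -1 else (1::real)\<bar>))"
    unfolding refl by (rule lborel_affine_euclidean) auto
  ultimately have "lborel = density (distr lborel borel (\<lambda>z. z - (2 * (z \<bullet> e) + c) *\<^sub>R e)) (\<lambda>_. 1)"
    by (simp only: ennreal_1)
  then show ?thesis unfolding density_1 by (rule sym)
qed

lemma anderson_coordinate_step:
  fixes v v' :: "'a::euclidean_space" and e :: 'a and C :: real
  assumes e: "e \<in> Basis" and same: "\<And>b. b \<in> Basis \<Longrightarrow> b \<noteq> e \<Longrightarrow> v \<bullet> b = v' \<bullet> b"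
    and le: "\<bar>v \<bullet> e\<bar> \<le> \<bar>v' \<bullet> e\<bar>" and C: "C \<ge> 0"
  defines "\<mu> \<equiv> density lborel (\<lambda>z. ennreal (C * exp (-(norm z)\<^sup>2/2)))"
  shows "emeasure \<mu> {z. (norm (z + v'))\<^sup>2 \<le> x} \<le> emeasure \<mu> {z. (norm (z + v))\<^sup>2 \<le> x}"
proof -
  txt \<open>The reflection in the e-th coordinate that swaps the centres \<open>-v\<close> and \<open>-v'\<close>.\<close>
  define R where "R z = z - (2 * (z \<bullet> e) + (v \<bullet> e + v' \<bullet> e)) *\<^sub>R e" for z
  have [measurable]: "R \<in> borel_measurable borel"
    unfolding R_def[abs_def] by measurable
  have R_e: "R z \<bullet> e = - (z \<bullet> e) - v \<bullet> e - v' \<bullet> e" for z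
    using e by (simp add: R_def inner_diff_left)
  have R_b: "R z \<bullet> b = z \<bullet> b" if "b \<in> Basis" "b \<noteq> e" for z b
    using that e by (simp add: R_def inner_diff_left inner_Basis)
  have at_e: "(R z + v) \<bullet> e = - ((z + v') \<bullet> e)" "(R z + v') \<bullet> e = - ((z + v) \<bullet> e)" for z
    by (simp_all add: R_e inner_add_left)
  have off_e: "(R z + w) \<bullet> b = (z + w) \<bullet> b" "(z + v) \<bullet> b = (z + v') \<bullet> b"
    if "b \<in> Basis" "b \<noteq> e" for z w b
    using that by (simp_all add: R_b same inner_add_left)
  have swap_v: "norm (R z + v) = norm (z + v')" and swap_v': "norm (R z + v') = norm (z + v)" for z
    by (intro norm_eq_componentwise, case_tac "b = e", simp_all add: at_e off_e)+
  show ?thesis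
    unfolding \<mu>_def
  proof (rule emeasure_density_le_by_swap[where R=R])
    show "distr lborel lborel R = lborel"
      unfolding R_def using distr_lborel_reflection[OF e] by (simp cong: distr_cong)
    show "R z \<in> {z. (norm (z + v'))\<^sup>2 \<le> x} - {z. (norm (z + v))\<^sup>2 \<le> x}
       \<longleftrightarrow> z \<in> {z. (norm (z + v))\<^sup>2 \<le> x} - {z. (norm (z + v'))\<^sup>2 \<le> x}" for z
      by (simp add: swap_v swap_v')
    show "ennreal (C * exp (- (norm (R z))\<^sup>2 / 2)) \<le> ennreal (C * exp (- (norm z)\<^sup>2 / 2))"
      if "z \<in> {z. (norm (z + v))\<^sup>2 \<le> x} - {z. (norm (z + v'))\<^sup>2 \<le> x}" for z
    proof -
      have "(norm (z + v))\<^sup>2 < (norm (z + v'))\<^sup>2"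
        using that by simp
      then have "norm (z + v) < norm (z + v')"
        by (rule power_less_imp_less_base) simp
      then have "\<bar>(z + v) \<bullet> e\<bar> < \<bar>(z + v') \<bullet> e\<bar>"
      proof (rule contrapos_pp)
        assume "\<not> \<bar>(z + v) \<bullet> e\<bar> < \<bar>(z + v') \<bullet> e\<bar>"
        then have "\<bar>(z + v') \<bullet> b\<bar> \<le> \<bar>(z + v) \<bullet> b\<bar>" if "b \<in> Basis" for b
          using that same by (cases "b = e") (simp_all add: inner_add_left)
        then show "\<not> norm (z + v) < norm (z + v')"
          by (simp add: norm_le_componentwise not_less)
      qed
      then have "\<bar>z \<bullet> e\<bar> \<le> \<bar>z \<bullet> e + v \<bullet> e + v' \<bullet> e\<bar>"
        using le by (intro abs_le_reflected) (simp_all add: inner_add_left)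
      then have "norm z \<le> norm (R z)"
        by (intro norm_le_componentwise, case_tac "b = e") (simp_all add: R_e R_b abs_minus_commute)
      then show ?thesis
        using C by (intro ennreal_leI mult_left_mono) (simp_all add: power_mono)
    qed
  qed simp_all
qed

lemma anderson_diagonal:
  fixes m m' C :: real
  assumes le: "\<bar>m\<bar> \<le> \<bar>m'\<bar>" and C: "C \<ge> 0"
  defines "\<mu> \<equiv> density lborel (\<lambda>z::'a::euclidean_space. ennreal (C * exp (-(norm z)\<^sup>2/2)))"
  shows "emeasure \<mu> {z. (norm (z + m' *\<^sub>R (\<Sum>b\<in>Basis. b)))\<^sup>2 \<le> x}
       \<le> emeasure \<mu> {z. (norm (z + m *\<^sub>R (\<Sum>b\<in>Basis. b)))\<^sup>2 \<le> x}"
proof -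
  define w where "w S = (\<Sum>b\<in>Basis. (if b \<in> S then m' else m) *\<^sub>R (b::'a))" for S
  have w_inner: "w S \<bullet> b = (if b \<in> S then m' else m)" if "b \<in> Basis" for S b
    using that unfolding w_def by (rule inner_sum_scaleR_Basis)
  have "emeasure \<mu> {z. (norm (z + w S))\<^sup>2 \<le> x} \<le> emeasure \<mu> {z. (norm (z + w {}))\<^sup>2 \<le> x}"
    if "finite S" "S \<subseteq> Basis" for S
    using that
  proof (induction S rule: finite_induct)
    case (insert e S)
    have "emeasure \<mu> {z. (norm (z + w (insert e S)))\<^sup>2 \<le> x} \<le> emeasure \<mu> {z. (norm (z + w S))\<^sup>2 \<le> x}"
      unfolding \<mu>_def using insert le C by (intro anderson_coordinate_step) (auto simp: w_inner)
    with insert show ?case by simp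
  qed simp
  moreover have "w Basis = m' *\<^sub>R (\<Sum>b\<in>Basis. b)" "w {} = m *\<^sub>R (\<Sum>b\<in>Basis. b)"
    by (simp_all add: w_def scaleR_sum_right)
  ultimately show ?thesis by (metis finite_Basis order_refl)
qed

section \<open>The law of the squared norm of a shifted standard Gaussian\<close>

definition std_gauss_pdf :: "real^'n::finite \<Rightarrow> real" where
  "std_gauss_pdf z = (2*pi) powr (- real CARD('n)/2) * exp (-(norm z)\<^sup>2/2)"

lemma std_gauss_density: "std_gauss TYPE('n::finite) = density lborel (\<lambda>z. ennreal (std_gauss_pdf z))"
  by (simp add: std_gauss_def std_gauss_pdf_def)

lemma std_gauss_pdf_measurable [measurable]: "std_gauss_pdf \<in> borel_measurable borel"
  unfolding std_gauss_pdf_def by measurable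

lemma sets_std_gauss [simp, measurable_cong]: "sets (std_gauss TYPE('n::finite)) = sets borel"
  by (simp add: std_gauss_def)

lemma space_std_gauss [simp]: "space (std_gauss TYPE('n::finite)) = UNIV"
  by (simp add: std_gauss_def)

lemma norm_square_eq_sum_Basis: "(norm (y::'a::euclidean_space))\<^sup>2 = (\<Sum>b\<in>Basis. (y \<bullet> b)\<^sup>2)"
  unfolding power2_norm_eq_inner by (subst euclidean_inner) (simp add: power2_eq_square)

lemma std_gauss_pdf_prod: "std_gauss_pdf (z::real^'n::finite) = (\<Prod>b\<in>Basis. std_normal_density (z \<bullet> b))"
proof -
  have "exp (-(norm z)\<^sup>2/2) = (\<Prod>b\<in>(Basis::(real^'n) set). exp (-(z \<bullet> b)\<^sup>2/2))"
    unfolding norm_square_eq_sum_Basis by (simp add: exp_sum[symmetric] sum_negf sum_divide_distrib)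
  moreover have "(2*pi) powr (- real CARD('n)/2) = (1/sqrt(2*pi))^CARD('n)"
    by (simp add: sqrt_def root_powr_inverse powr_minus_divide powr_realpow[symmetric] powr_powr
       powr_divide flip: powr_minus)
  ultimately show ?thesis
    by (simp add: std_gauss_pdf_def std_normal_density_def prod_dividef power_one_over field_simps)
qed

lemma prob_space_std_gauss: "prob_space (std_gauss TYPE('n::finite))"
proof
  have "(\<integral>\<^sup>+x. std_normal_density x \<partial>lborel) = 1"
    by (subst nn_integral_eq_integral) auto
  then have "(\<integral>\<^sup>+z. ennreal (std_gauss_pdf (z::real^'n)) \<partial>lborel) = 1"
    unfolding std_gauss_pdf_prod
    by (subst prod_ennreal[symmetric], simp,
        subst nn_integral_lborel_prod[where f="\<lambda>_ x. ennreal (std_normal_density x)"]) auto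
  then show "emeasure (std_gauss TYPE('n)) (space (std_gauss TYPE('n))) = 1"
    unfolding std_gauss_density by (subst emeasure_density) auto
qed

lemma vec_eq_scaleR_sum_Basis: "(vec m :: real^'n::finite) = m *\<^sub>R (\<Sum>b\<in>Basis. b)"
proof (rule euclidean_eqI)
  fix b :: "real^'n" assume b: "b \<in> Basis"
  then obtain i where "b = axis i 1" by (auto simp: Basis_vec_def)
  then have "vec m \<bullet> b = m" by (simp add: inner_axis)
  moreover have "(\<Sum>j\<in>Basis. 1 *\<^sub>R j) \<bullet> b = (1::real)" using b by (rule inner_sum_scaleR_Basis)
  ultimately show "vec m \<bullet> b = (m *\<^sub>R (\<Sum>b\<in>Basis. b)) \<bullet> b" by simp
qed

definition sqnorm_law :: "'n::finite itself \<Rightarrow> real \<Rightarrow> real measure" where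
  "sqnorm_law T m = distr (std_gauss T) borel (\<lambda>z::real^'n. (norm (z + vec m))\<^sup>2)"

definition sqnorm_qf :: "'n::finite itself \<Rightarrow> real \<Rightarrow> real \<Rightarrow> real" where
  "sqnorm_qf T m p = Inf {x. p \<le> cdf (sqnorm_law T m) x}"

lemma real_distribution_sqnorm_law: "real_distribution (sqnorm_law TYPE('n::finite) m)"
proof -
  interpret prob_space "std_gauss TYPE('n)" by (rule prob_space_std_gauss)
  show ?thesis unfolding sqnorm_law_def by simp
qed

lemma cdf_sqnorm_law:
  "cdf (sqnorm_law TYPE('n::finite) m) x = measure (std_gauss TYPE('n)) {z. (norm (z + vec m))\<^sup>2 \<le> x}"
  unfolding cdf_def sqnorm_law_def by (subst measure_distr) (auto simp: vimage_def)

lemma chi2_cdf_eq_cdf_sqnorm_law: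
  "chi2_cdf TYPE('n::finite) lam x = cdf (sqnorm_law TYPE('n) (sqrt (lam / CARD('n)))) x"
  by (simp add: chi2_cdf_def cdf_sqnorm_law vec_def)

lemma chi2_qf_eq_sqnorm_qf:
  "chi2_qf TYPE('n::finite) lam p = sqnorm_qf TYPE('n) (sqrt (lam / CARD('n))) p"
  by (simp add: chi2_qf_def sqnorm_qf_def chi2_cdf_eq_cdf_sqnorm_law)

lemma cdf_sqnorm_law_anderson:
  assumes "\<bar>m\<bar> \<le> \<bar>m'\<bar>"
  shows "cdf (sqnorm_law TYPE('n::finite) m') x \<le> cdf (sqnorm_law TYPE('n) m) x"
proof -
  interpret prob_space "std_gauss TYPE('n)" by (rule prob_space_std_gauss)
  have "emeasure (std_gauss TYPE('n)) {z. (norm (z + vec m'))\<^sup>2 \<le> x}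
     \<le> emeasure (std_gauss TYPE('n)) {z. (norm (z + vec m))\<^sup>2 \<le> x}"
    unfolding std_gauss_def vec_eq_scaleR_sum_Basis by (rule anderson_diagonal[OF assms]) simp
  then show ?thesis by (simp add: cdf_sqnorm_law emeasure_eq_measure)
qed

lemma isCont_cdf_sqnorm_law: "isCont (cdf (sqnorm_law TYPE('n::finite) m)) x"
proof -
  interpret real_distribution "sqnorm_law TYPE('n) m" by (rule real_distribution_sqnorm_law)
  have sub: "{z::real^'n. (norm (z + vec m))\<^sup>2 = x} \<subseteq> sphere (- vec m) (sqrt x)"
    by (auto simp: dist_norm norm_minus_commute)
  have null: "sphere (- vec m :: real^'n) (sqrt x) \<in> null_sets lborel"
    using negligible_sphere[of "- vec m" "sqrt x"]
    by (auto simp: null_sets_completion_iff negligible_iff_null_sets negligible_convex_frontier)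
  have "{z::real^'n. (norm (z + vec m))\<^sup>2 = x} \<in> null_sets lborel"
    by (rule null_sets_subset[OF null _ sub]) measurable
  then have "emeasure (std_gauss TYPE('n)) {z::real^'n. (norm (z + vec m))\<^sup>2 = x} = 0"
    unfolding std_gauss_def by (subst emeasure_density) (auto intro: nn_integral_null_set)
  then have "measure (sqnorm_law TYPE('n) m) {x} = 0"
    by (simp add: sqnorm_law_def measure_def emeasure_distr vimage_def)
  then show ?thesis by (simp add: isCont_cdf)
qed

lemma cdf_sqnorm_qf:
  "0 < p \<Longrightarrow> p < 1 \<Longrightarrow> cdf (sqnorm_law TYPE('n::finite) m) (sqnorm_qf TYPE('n) m p) = p"
  unfolding sqnorm_qf_def
  by (rule real_distribution.cdf_Inf_quantile[OF real_distribution_sqnorm_law isCont_cdf_sqnorm_law])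

section \<open>Isotropic Gaussians and their likelihood ratios\<close>

definition gauss_pdf :: "real \<Rightarrow> real^'n::finite \<Rightarrow> real^'n \<Rightarrow> real" where
  "gauss_pdf \<sigma> t y = (2*pi) powr (- real CARD('n)/2) / \<sigma>^CARD('n) * exp (-(norm (y - t))\<^sup>2/(2*\<sigma>\<^sup>2))"

definition gauss :: "real \<Rightarrow> real^'n::finite \<Rightarrow> (real^'n) measure" where
  "gauss \<sigma> t = density lborel (\<lambda>y. ennreal (gauss_pdf \<sigma> t y))"

lemma gauss_pdf_measurable [measurable]: "gauss_pdf \<sigma> t \<in> borel_measurable borel"
  unfolding gauss_pdf_def by measurable

lemma gauss_pdf_nonneg: "\<sigma> > 0 \<Longrightarrow> gauss_pdf \<sigma> t y \<ge> 0"
  by (simp add: gauss_pdf_def)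

lemma emeasure_gauss:
  fixes t :: "real^'n::finite"
  assumes \<sigma>: "\<sigma> > 0" and [measurable]: "S \<in> sets borel"
  shows "emeasure (gauss \<sigma> t) S = emeasure (std_gauss TYPE('n)) {z. t + \<sigma> *\<^sub>R z \<in> S}"
proof -
  let ?A = "\<lambda>x::real^'n. t + \<sigma> *\<^sub>R x"
  have pdf: "\<bar>\<sigma>\<bar>^DIM(real^'n) * gauss_pdf \<sigma> t (?A x) = std_gauss_pdf x" for x
    using \<sigma> by (simp add: gauss_pdf_def std_gauss_pdf_def power2_eq_square field_simps)
  have "emeasure (gauss \<sigma> t) S = (\<integral>\<^sup>+y. ennreal (gauss_pdf \<sigma> t y) * indicator S y
      \<partial>density (distr lborel borel ?A) (\<lambda>_. \<bar>\<sigma>\<bar>^DIM(real^'n)))"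
    unfolding gauss_def using \<sigma> by (subst lborel_affine[of \<sigma> t]) (auto simp: emeasure_density)
  also have "\<dots> = (\<integral>\<^sup>+x. ennreal (std_gauss_pdf x) * indicator {z. ?A z \<in> S} x \<partial>lborel)"
    using \<sigma> by (simp add: nn_integral_density nn_integral_distr pdf[symmetric] ennreal_mult'
        gauss_pdf_nonneg mult.assoc indicator_def)
  also have "\<dots> = emeasure (std_gauss TYPE('n)) {z. ?A z \<in> S}"
    unfolding std_gauss_density by (simp add: emeasure_density)
  finally show ?thesis .
qed

lemma prob_space_gauss: "\<sigma> > 0 \<Longrightarrow> prob_space (gauss \<sigma> (t::real^'n::finite))"
  using emeasure_gauss[of \<sigma> UNIV t] prob_space.emeasure_space_1[OF prob_space_std_gauss]
  by (intro prob_spaceI) (simp add: gauss_def)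

lemma finite_measure_gauss_density:
  "\<sigma> > 0 \<Longrightarrow> finite_measure (density lborel (\<lambda>y. ennreal (gauss_pdf \<sigma> (t::real^'n::finite) y)))"
  using prob_space_gauss[of \<sigma> t] unfolding gauss_def by (rule prob_space.finite_measure)

lemma measure_gauss_sqnorm_le:
  assumes \<sigma>: "\<sigma> > 0"
  shows "measure (gauss \<sigma> (vec d :: real^'n::finite)) {y. (norm (y + vec k))\<^sup>2 \<le> R}
       = cdf (sqnorm_law TYPE('n) ((d + k) / \<sigma>)) (R / \<sigma>\<^sup>2)"
proof -
  have "vec d + \<sigma> *\<^sub>R z + vec k = \<sigma> *\<^sub>R (z + vec ((d + k) / \<sigma>))" for z :: "real^'n"
    using \<sigma> by (simp add: vec_eq_iff field_simps)
  then have "(norm (vec d + \<sigma> *\<^sub>R z + vec k))\<^sup>2 \<le> R \<longleftrightarrow> (norm (z + vec ((d + k) / \<sigma>)))\<^sup>2 \<le> R / \<sigma>\<^sup>2"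
    for z :: "real^'n"
    using \<sigma> by (simp add: power_mult_distrib pos_le_divide_eq mult.commute)
  then show ?thesis
    using emeasure_gauss[OF \<sigma>, of "{y. (norm (y + vec k))\<^sup>2 \<le> R}" "vec d :: real^'n"]
    by (simp add: measure_def cdf_sqnorm_law)
qed

lemma gauss_pdf_ratio:
  fixes \<sigma>0 \<sigma>1 :: real and b :: "real^'n::finite"
  assumes \<sigma>: "\<sigma>0 > 0" "\<sigma>1 > 0"
  shows "\<exists>c>0. \<forall>y. gauss_pdf \<sigma>1 (((\<sigma>1\<^sup>2 - \<sigma>0\<^sup>2) / \<sigma>0\<^sup>2) *\<^sub>R b) y
    = c * exp ((1/\<sigma>0\<^sup>2 - 1/\<sigma>1\<^sup>2) / 2 * (norm (y + b))\<^sup>2) * gauss_pdf \<sigma>0 0 y"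
proof -
  define a where "a = ((\<sigma>1\<^sup>2 - \<sigma>0\<^sup>2) / \<sigma>0\<^sup>2) *\<^sub>R b"
  define \<kappa> where "\<kappa> = (1/\<sigma>0\<^sup>2 - 1/\<sigma>1\<^sup>2) / 2"
  define \<beta> where "\<beta> = - (norm a)\<^sup>2 / (2 * \<sigma>1\<^sup>2) - \<kappa> * (norm b)\<^sup>2"
  have expo: "- (norm (y - a))\<^sup>2 / (2 * \<sigma>1\<^sup>2) = \<beta> + \<kappa> * (norm (y + b))\<^sup>2 + - (norm y)\<^sup>2 / (2 * \<sigma>0\<^sup>2)"
    for y
    unfolding power2_norm_eq_inner a_def \<beta>_def \<kappa>_def using \<sigma>
    by (simp add: inner_add_left inner_add_right inner_diff_left inner_diff_right inner_commute[of b y]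
        field_simps power2_eq_square)
  have "gauss_pdf \<sigma>1 a y = ((\<sigma>0 / \<sigma>1)^CARD('n) * exp \<beta>) * exp (\<kappa> * (norm (y + b))\<^sup>2) * gauss_pdf \<sigma>0 0 y"
    for y
  proof -
    have "exp (- (norm (y - a))\<^sup>2 / (2 * \<sigma>1\<^sup>2))
        = exp \<beta> * exp (\<kappa> * (norm (y + b))\<^sup>2) * exp (- (norm y)\<^sup>2 / (2 * \<sigma>0\<^sup>2))"
      by (simp only: expo exp_add)
    then show ?thesis
      using \<sigma> by (simp add: gauss_pdf_def power_divide field_simps)
  qed
  moreover have "(\<sigma>0 / \<sigma>1)^CARD('n) * exp \<beta> > 0" using \<sigma> by simp
  ultimately show ?thesis unfolding a_def \<kappa>_def by blast
qed

lemma gauss_neyman_pearson_narrower: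
  fixes b :: "real^'n::finite" and R :: real
  assumes \<sigma>: "0 < \<sigma>1" "\<sigma>1 < \<sigma>0" and [measurable]: "S \<in> sets borel"
  defines "a \<equiv> ((\<sigma>1\<^sup>2 - \<sigma>0\<^sup>2) / \<sigma>0\<^sup>2) *\<^sub>R b" and "D \<equiv> {y. (norm (y + b))\<^sup>2 \<le> R}"
  assumes size: "measure (gauss \<sigma>0 0) S \<le> measure (gauss \<sigma>0 0) D"
  shows "measure (gauss \<sigma>1 a) S \<le> measure (gauss \<sigma>1 a) D"
proof -
  have \<sigma>0: "\<sigma>0 > 0" using \<sigma> by simp
  define \<kappa> where "\<kappa> = (1/\<sigma>0\<^sup>2 - 1/\<sigma>1\<^sup>2) / 2"
  have \<kappa>: "\<kappa> \<le> 0" using \<sigma> by (simp add: \<kappa>_def frac_le power_mono)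
  obtain c where c: "c > 0"
    and ratio: "\<And>y. gauss_pdf \<sigma>1 a y = c * exp (\<kappa> * (norm (y + b))\<^sup>2) * gauss_pdf \<sigma>0 0 y"
    using gauss_pdf_ratio[OF \<sigma>0 \<sigma>(1), of b] unfolding a_def \<kappa>_def by blast
  have pdf0: "gauss_pdf \<sigma>0 0 y \<ge> 0" for y using \<sigma>0 by (rule gauss_pdf_nonneg)
  show ?thesis
    using size unfolding gauss_def
  proof (rule neyman_pearson[where K = "c * exp (\<kappa> * R)", rotated -1])
    show "c * exp (\<kappa> * R) * gauss_pdf \<sigma>0 0 y \<le> gauss_pdf \<sigma>1 a y" if "y \<in> D" for y
      using that \<kappa> c pdf0[of y] unfolding ratio D_def
      by (intro mult_right_mono mult_left_mono) (simp_all add: mult_left_mono_neg)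
    show "gauss_pdf \<sigma>1 a y \<le> c * exp (\<kappa> * R) * gauss_pdf \<sigma>0 0 y" if "y \<notin> D" for y
      using that \<kappa> c pdf0[of y] unfolding ratio D_def
      by (intro mult_right_mono mult_left_mono) (simp_all add: mult_left_mono_neg)
  qed (use \<sigma> \<sigma>0 c pdf0 in \<open>auto simp: D_def finite_measure_gauss_density\<close>)
qed

lemma gauss_neyman_pearson_wider:
  fixes b :: "real^'n::finite" and R :: real
  assumes \<sigma>: "0 < \<sigma>0" "\<sigma>0 < \<sigma>1" and [measurable]: "S \<in> sets borel"
  defines "a \<equiv> ((\<sigma>1\<^sup>2 - \<sigma>0\<^sup>2) / \<sigma>0\<^sup>2) *\<^sub>R b" and "D \<equiv> {y. (norm (y + b))\<^sup>2 \<le> R}"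
  assumes size: "measure (gauss \<sigma>0 0) D \<le> measure (gauss \<sigma>0 0) S"
  shows "measure (gauss \<sigma>1 a) D \<le> measure (gauss \<sigma>1 a) S"
proof -
  have \<sigma>1: "\<sigma>1 > 0" using \<sigma> by simp
  define \<kappa> where "\<kappa> = (1/\<sigma>0\<^sup>2 - 1/\<sigma>1\<^sup>2) / 2"
  have \<kappa>: "\<kappa> \<ge> 0" using \<sigma> by (simp add: \<kappa>_def frac_le power_mono)
  obtain c where c: "c > 0"
    and ratio: "\<And>y. gauss_pdf \<sigma>1 a y = c * exp (\<kappa> * (norm (y + b))\<^sup>2) * gauss_pdf \<sigma>0 0 y"
    using gauss_pdf_ratio[OF \<sigma>(1) \<sigma>1, of b] unfolding a_def \<kappa>_def by blast
  have pdf0: "gauss_pdf \<sigma>0 0 y \<ge> 0" for y using \<sigma> by (intro gauss_pdf_nonneg)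
  have compl: "measure (gauss \<sigma> t) (UNIV - A) = 1 - measure (gauss \<sigma> t) A"
    if "\<sigma> > 0" "A \<in> sets borel" for \<sigma> and t :: "real^'n" and A
    using prob_space.prob_compl[OF prob_space_gauss[OF that(1)], of A] that(2) by (simp add: gauss_def)
  have "measure (gauss \<sigma>1 a) (UNIV - S) \<le> measure (gauss \<sigma>1 a) (UNIV - D)"
    unfolding gauss_def
  proof (rule neyman_pearson[where K = "c * exp (\<kappa> * R)"])
    show "measure (density lborel (\<lambda>y. ennreal (gauss_pdf \<sigma>0 0 y))) (UNIV - S)
        \<le> measure (density lborel (\<lambda>y. ennreal (gauss_pdf \<sigma>0 0 y))) (UNIV - D)"
      using size \<sigma> by (simp add: compl D_def flip: gauss_def)
    show "c * exp (\<kappa> * R) * gauss_pdf \<sigma>0 0 y \<le> gauss_pdf \<sigma>1 a y" if "y \<in> UNIV - D" for y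
      using that \<kappa> c pdf0[of y] unfolding ratio D_def
      by (intro mult_right_mono mult_left_mono) (simp_all add: mult_left_mono)
    show "gauss_pdf \<sigma>1 a y \<le> c * exp (\<kappa> * R) * gauss_pdf \<sigma>0 0 y" if "y \<notin> UNIV - D" for y
      using that \<kappa> c pdf0[of y] unfolding ratio D_def
      by (intro mult_right_mono mult_left_mono) (simp_all add: mult_left_mono)
  qed (use \<sigma> \<sigma>1 c pdf0 in \<open>auto simp: D_def finite_measure_gauss_density\<close>)
  then show ?thesis using \<sigma>1 by (simp add: compl D_def)
qed

section \<open>Monotonicity of the certified probabilities\<close>

lemma cdf_sqnorm_qf_mono_narrower:
  assumes \<sigma>: "0 < \<sigma>1" "\<sigma>1 < \<sigma>0" and p: "0 < p" "p < 1" and u: "0 \<le> u" "u \<le> u'"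
  shows "cdf (sqnorm_law TYPE('n::finite) (\<sigma>1 * u)) (\<sigma>0\<^sup>2 / \<sigma>1\<^sup>2 * sqnorm_qf TYPE('n) (\<sigma>0 * u) p)
       \<le> cdf (sqnorm_law TYPE('n) (\<sigma>1 * u')) (\<sigma>0\<^sup>2 / \<sigma>1\<^sup>2 * sqnorm_qf TYPE('n) (\<sigma>0 * u') p)"
proof -
  have \<sigma>0: "\<sigma>0 > 0" using \<sigma> by simp
  define c where "c = \<sigma>0\<^sup>2 - \<sigma>1\<^sup>2"
  have c: "c > 0" using \<sigma> by (simp add: c_def power_strict_mono)
  define T where "T = sqnorm_qf TYPE('n) (\<sigma>0 * u) p"
  define T' where "T' = sqnorm_qf TYPE('n) (\<sigma>0 * u') p"
  define s where "s = \<sigma>0\<^sup>2 * u + c * (u' - u)"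
  define D where "D = {y::real^'n. (norm (y + vec (\<sigma>0\<^sup>2 * u')))\<^sup>2 \<le> \<sigma>0\<^sup>2 * T'}"
  txt \<open>The centre of \<open>S\<close> is chosen so that its mass under the shifted Gaussian is the value
    at \<open>u\<close>, while Anderson's inequality bounds its mass under \<open>N(0, \<sigma>\<^sub>0\<^sup>2 I)\<close> by \<open>p\<close>.\<close>
  define S where "S = {y::real^'n. (norm (y + vec s))\<^sup>2 \<le> \<sigma>0\<^sup>2 * T}"
  have a: "((\<sigma>1\<^sup>2 - \<sigma>0\<^sup>2) / \<sigma>0\<^sup>2) *\<^sub>R vec (\<sigma>0\<^sup>2 * u') = (vec (- c * u') :: real^'n)"
    using \<sigma>0 by (simp add: c_def vec_eq_iff field_simps)
  have "measure (gauss \<sigma>0 0) S = cdf (sqnorm_law TYPE('n) (s / \<sigma>0)) T"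
    using measure_gauss_sqnorm_le[OF \<sigma>0, of 0 s, where 'n='n] \<sigma>0 by (simp add: S_def)
  also have "\<dots> \<le> cdf (sqnorm_law TYPE('n) (\<sigma>0 * u)) T"
  proof (rule cdf_sqnorm_law_anderson)
    have "0 \<le> c * (u' - u)" using c u by simp
    then have "\<sigma>0 * u \<le> s / \<sigma>0"
      using \<sigma>0 by (simp add: s_def power2_eq_square field_simps)
    moreover have "0 \<le> \<sigma>0 * u" using \<sigma>0 u by simp
    ultimately show "\<bar>\<sigma>0 * u\<bar> \<le> \<bar>s / \<sigma>0\<bar>" by linarith
  qed
  also have "\<dots> = measure (gauss \<sigma>0 0) D"
    using measure_gauss_sqnorm_le[OF \<sigma>0, of 0 "\<sigma>0\<^sup>2 * u'", where 'n='n] \<sigma>0 p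
    by (simp add: D_def T_def T'_def cdf_sqnorm_qf power2_eq_square)
  finally have "measure (gauss \<sigma>1 (vec (- c * u'))) S \<le> measure (gauss \<sigma>1 (vec (- c * u'))) D"
    using gauss_neyman_pearson_narrower[OF \<sigma>, of S "vec (\<sigma>0\<^sup>2 * u')"] by (simp add: a D_def S_def)
  moreover have "(- c * u' + s) / \<sigma>1 = \<sigma>1 * u" "(- c * u' + \<sigma>0\<^sup>2 * u') / \<sigma>1 = \<sigma>1 * u'"
    using \<sigma> by (simp_all add: s_def c_def power2_eq_square field_simps)
  ultimately show ?thesis
    using \<sigma> by (simp add: D_def S_def T_def T'_def measure_gauss_sqnorm_le)
qed

lemma cdf_sqnorm_qf_antimono_wider:
  assumes \<sigma>: "0 < \<sigma>0" "\<sigma>0 < \<sigma>1" and p: "0 < p" "p < 1" and u: "0 \<le> u" "u \<le> u'"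
  shows "cdf (sqnorm_law TYPE('n::finite) (\<sigma>1 * u')) (\<sigma>0\<^sup>2 / \<sigma>1\<^sup>2 * sqnorm_qf TYPE('n) (\<sigma>0 * u') p)
       \<le> cdf (sqnorm_law TYPE('n) (\<sigma>1 * u)) (\<sigma>0\<^sup>2 / \<sigma>1\<^sup>2 * sqnorm_qf TYPE('n) (\<sigma>0 * u) p)"
proof -
  have \<sigma>1: "\<sigma>1 > 0" using \<sigma> by simp
  define c where "c = \<sigma>1\<^sup>2 - \<sigma>0\<^sup>2"
  have c: "c > 0" using \<sigma> by (simp add: c_def power_strict_mono)
  define T where "T = sqnorm_qf TYPE('n) (\<sigma>0 * u) p"
  define T' where "T' = sqnorm_qf TYPE('n) (\<sigma>0 * u') p"
  define D where "D = {y::real^'n. (norm (y + vec (\<sigma>0\<^sup>2 * u')))\<^sup>2 \<le> \<sigma>0\<^sup>2 * T'}"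
  define B where "B = {y::real^'n. (norm (y + vec (\<sigma>0\<^sup>2 * u)))\<^sup>2 \<le> \<sigma>0\<^sup>2 * T}"
  have a: "((\<sigma>1\<^sup>2 - \<sigma>0\<^sup>2) / \<sigma>0\<^sup>2) *\<^sub>R vec (\<sigma>0\<^sup>2 * u') = (vec (c * u') :: real^'n)"
    using \<sigma> by (simp add: c_def vec_eq_iff field_simps)
  have "measure (gauss \<sigma>0 0) D = p" "measure (gauss \<sigma>0 0) B = p"
    using measure_gauss_sqnorm_le[OF \<sigma>(1), of 0, where 'n='n] \<sigma> p
    by (simp_all add: D_def B_def T_def T'_def cdf_sqnorm_qf power2_eq_square)
  then have "measure (gauss \<sigma>1 (vec (c * u'))) D \<le> measure (gauss \<sigma>1 (vec (c * u'))) B"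
    using gauss_neyman_pearson_wider[OF \<sigma>, of B "vec (\<sigma>0\<^sup>2 * u')"] by (simp add: a D_def B_def)
  also have "\<dots> = cdf (sqnorm_law TYPE('n) ((c * u' + \<sigma>0\<^sup>2 * u) / \<sigma>1)) (\<sigma>0\<^sup>2 / \<sigma>1\<^sup>2 * T)"
    using \<sigma>1 by (simp add: B_def measure_gauss_sqnorm_le)
  also have "\<dots> \<le> cdf (sqnorm_law TYPE('n) (\<sigma>1 * u)) (\<sigma>0\<^sup>2 / \<sigma>1\<^sup>2 * T)"
  proof (rule cdf_sqnorm_law_anderson)
    have "0 \<le> c * (u' - u)" using c u by simp
    then have "\<sigma>1 * u \<le> (c * u' + \<sigma>0\<^sup>2 * u) / \<sigma>1"
      using \<sigma>1 by (simp add: c_def power2_eq_square field_simps)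
    moreover have "0 \<le> \<sigma>1 * u" using \<sigma>1 u by simp
    ultimately show "\<bar>\<sigma>1 * u\<bar> \<le> \<bar>(c * u' + \<sigma>0\<^sup>2 * u) / \<sigma>1\<bar>" by linarith
  qed
  finally have "measure (gauss \<sigma>1 (vec (c * u'))) D \<le> cdf (sqnorm_law TYPE('n) (\<sigma>1 * u)) (\<sigma>0\<^sup>2 / \<sigma>1\<^sup>2 * T)" .
  moreover have "(c * u' + \<sigma>0\<^sup>2 * u') / \<sigma>1 = \<sigma>1 * u'"
    using \<sigma>1 by (simp add: c_def power2_eq_square field_simps)
  ultimately show ?thesis
    using \<sigma>1 by (simp add: D_def T_def T'_def measure_gauss_sqnorm_le)
qed

lemma sqrt_noncentrality:
  assumes "0 \<le> s" "0 \<le> a" "0 \<le> n"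
  shows "sqrt (s\<^sup>2 * a\<^sup>2 / c\<^sup>2 / n) = s * (a / (\<bar>c\<bar> * sqrt n))"
  using assms by (simp add: real_sqrt_divide real_sqrt_mult)

lemma xi_gt_eq_cdf_sqnorm_qf:
  assumes \<sigma>: "0 < \<sigma>0" "0 < \<sigma>1" and a: "0 \<le> a"
  defines "u \<equiv> a / (\<bar>\<sigma>0\<^sup>2 - \<sigma>1\<^sup>2\<bar> * sqrt CARD('n::finite))"
  shows "xi_gt TYPE('n) \<sigma>0 pA a \<sigma>1
    = cdf (sqnorm_law TYPE('n) (\<sigma>1 * u)) (\<sigma>0\<^sup>2 / \<sigma>1\<^sup>2 * sqnorm_qf TYPE('n) (\<sigma>0 * u) (1 - pA))"
proof -
  have sq: "sqrt (\<sigma>\<^sup>2 * a\<^sup>2 / (\<sigma>0\<^sup>2 - \<sigma>1\<^sup>2)\<^sup>2 / CARD('n)) = \<sigma> * u" if "0 \<le> \<sigma>" for \<sigma>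
    unfolding u_def using that a by (intro sqrt_noncentrality) simp_all
  show ?thesis
    unfolding xi_gt_def chi2_cdf_eq_cdf_sqnorm_law chi2_qf_eq_sqnorm_qf
    by (simp only: sq[OF less_imp_le[OF \<sigma>(1)]] sq[OF less_imp_le[OF \<sigma>(2)]])
qed

lemma xi_lt_eq_cdf_sqnorm_qf:
  assumes \<sigma>: "0 < \<sigma>0" "0 < \<sigma>1" and a: "0 \<le> a"
  defines "u \<equiv> a / (\<bar>\<sigma>1\<^sup>2 - \<sigma>0\<^sup>2\<bar> * sqrt CARD('n::finite))"
  shows "xi_lt TYPE('n) \<sigma>0 pA a \<sigma>1
    = 1 - cdf (sqnorm_law TYPE('n) (\<sigma>1 * u)) (\<sigma>0\<^sup>2 / \<sigma>1\<^sup>2 * sqnorm_qf TYPE('n) (\<sigma>0 * u) pA)"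
proof -
  have sq: "sqrt (\<sigma>\<^sup>2 * a\<^sup>2 / (\<sigma>1\<^sup>2 - \<sigma>0\<^sup>2)\<^sup>2 / CARD('n)) = \<sigma> * u" if "0 \<le> \<sigma>" for \<sigma>
    unfolding u_def using that a by (intro sqrt_noncentrality) simp_all
  show ?thesis
    unfolding xi_lt_def chi2_cdf_eq_cdf_sqnorm_law chi2_qf_eq_sqnorm_qf
    by (simp only: sq[OF less_imp_le[OF \<sigma>(1)]] sq[OF less_imp_le[OF \<sigma>(2)]])
qed

lemma mono_on_xi_gt:
  assumes \<sigma>: "0 < \<sigma>1" "\<sigma>1 < \<sigma>0" and pA: "0 < pA" "pA < 1"
  shows "mono_on {0..} (\<lambda>a. xi_gt TYPE('n::finite) \<sigma>0 pA a \<sigma>1)"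
proof (rule mono_onI)
  fix a b :: real assume "a \<in> {0..}" "b \<in> {0..}" "a \<le> b"
  then have ab: "0 \<le> a" "0 \<le> b" "a \<le> b" by simp_all
  have \<sigma>0: "0 < \<sigma>0" using \<sigma> by simp
  define r where "r = \<bar>\<sigma>0\<^sup>2 - \<sigma>1\<^sup>2\<bar> * sqrt CARD('n)"
  have "0 \<le> a / r" "a / r \<le> b / r"
    using ab by (simp_all add: r_def divide_right_mono)
  then show "xi_gt TYPE('n) \<sigma>0 pA a \<sigma>1 \<le> xi_gt TYPE('n) \<sigma>0 pA b \<sigma>1"
    unfolding xi_gt_eq_cdf_sqnorm_qf[OF \<sigma>0 \<sigma>(1) ab(1)] xi_gt_eq_cdf_sqnorm_qf[OF \<sigma>0 \<sigma>(1) ab(2)]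
      r_def[symmetric] using pA by (intro cdf_sqnorm_qf_mono_narrower[OF \<sigma>]) simp_all
qed

lemma mono_on_xi_lt:
  assumes \<sigma>: "0 < \<sigma>0" "\<sigma>0 < \<sigma>1" and pA: "0 < pA" "pA < 1"
  shows "mono_on {0..} (\<lambda>a. xi_lt TYPE('n::finite) \<sigma>0 pA a \<sigma>1)"
proof (rule mono_onI)
  fix a b :: real assume "a \<in> {0..}" "b \<in> {0..}" "a \<le> b"
  then have ab: "0 \<le> a" "0 \<le> b" "a \<le> b" by simp_all
  have \<sigma>1: "0 < \<sigma>1" using \<sigma> by simp
  define r where "r = \<bar>\<sigma>1\<^sup>2 - \<sigma>0\<^sup>2\<bar> * sqrt CARD('n)"
  have "0 \<le> a / r" "a / r \<le> b / r"
    using ab by (simp_all add: r_def divide_right_mono)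
  from cdf_sqnorm_qf_antimono_wider[OF \<sigma> pA this, where 'n='n]
  show "xi_lt TYPE('n) \<sigma>0 pA a \<sigma>1 \<le> xi_lt TYPE('n) \<sigma>0 pA b \<sigma>1"
    unfolding xi_lt_eq_cdf_sqnorm_qf[OF \<sigma>(1) \<sigma>1 ab(1)] xi_lt_eq_cdf_sqnorm_qf[OF \<sigma>(1) \<sigma>1 ab(2)]
      r_def[symmetric] by linarith
qed

theorem mainTheorem11:
  fixes sigma0 pA sigma1 :: real
  assumes "sigma0 > 0" and "0 < pA" and "pA < 1"
  shows "(0 < sigma1 \<and> sigma1 < sigma0 \<longrightarrow>
            mono_on {0..} (\<lambda>a. xi_gt TYPE('n::finite) sigma0 pA a sigma1)) \<and>
         (sigma1 > sigma0 \<longrightarrow>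
            mono_on {0..} (\<lambda>a. xi_lt TYPE('n::finite) sigma0 pA a sigma1))"
  using assms by (simp add: mono_on_xi_gt mono_on_xi_lt)

end
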